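(* Let $n\ge4$ and $1\le d\le\lfloor n/2\rfloor$, and let $\mathcal{M}_{2,d}$ be the maximum size of a $d$-intersecting family in $\mathbb{G}_2(n,2d)$. Then $\mathcal{M}_{2,d}<2^n-1$.
   Context: $\mathbb{G}_2(n,k)$ denotes the set of all $k$-dimensional subspaces of $\mathbb{F}_2^n$. A family $\mathcal{F}$ of subspaces is $\lambda$-intersecting if $\dim(X\cap Y)=\lambda$ for all distinct $X,Y\in\mathcal{F}$. *)

theory Defs
  imports "HOL-Analysis.Analysis" "HOL-Library.Z2"
begin

text \<open>F_2^n is modelled as bit ^ 'n with CARD('n) = n; subspaces and dimension are the
library notions vec.subspace / vec.dim of the vector space (*s) over the field bit.\<close>

definition Grass2 :: "nat \<Rightarrow> (bit ^ ('n::finite)) set set" where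
  "Grass2 k = {X. vec.subspace X \<and> vec.dim X = k}"

definition lambda_intersecting :: "nat \<Rightarrow> (bit ^ 'n) set set \<Rightarrow> bool" where
  "lambda_intersecting l F \<longleftrightarrow>
     (\<forall>X\<in>F. \<forall>Y\<in>F. X \<noteq> Y \<longrightarrow> vec.dim (X \<inter> Y) = l)"

definition max_intersecting :: "nat \<Rightarrow> nat \<Rightarrow> ('n::finite) itself \<Rightarrow> nat" where
  "max_intersecting k l _ =
     Max {card F | F :: (bit ^ 'n) set set. F \<subseteq> Grass2 k \<and> lambda_intersecting l F}"

end

theory Submission
  imports Defs
begin

(* Deleting the zero vector turns a d-intersecting family of 2d-subspaces of F_2^n into a
   family of k = 2^(2d) - 1 element subsets of the v = 2^n - 1 nonzero vectors, any two of
   which meet in exactly l = 2^d - 1 points.  For v such sets, the v + 1 characteristic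
   vectors of the sets and of the whole point set are linearly dependent; summing a
   dependency over the points of each set and over all points shows that this forces
   l (v - 1) = k (k - 1), the parameter relation of a symmetric design.  Here that relation
   reads 2^n + 2^(d+1) = 2^(3d) + 2^(2d), which contradicts the uniqueness of binary
   expansions once n >= 4. *)

context vector_space
begin

lemma card_span_independent:
  assumes "finite (UNIV :: 'a set)" "finite B" "independent B"
  shows "card (span B) = CARD('a) ^ card B"
proof -
  let ?comb = "\<lambda>u. \<Sum>v\<in>B. scale (u v) v"
  have "span B = ?comb ` (B \<rightarrow>\<^sub>E UNIV)"
  proof -
    have "?comb u \<in> ?comb ` (B \<rightarrow>\<^sub>E UNIV)" for u
    proof (rule image_eqI)
      show "?comb u = ?comb (restrict u B)"
        by (rule sum.cong) simp_all
    qed (rule restrict_PiE_iff[THEN iffD2], simp)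
    then show ?thesis
      using span_finite[OF assms(2)] by auto
  qed
  moreover have "inj_on ?comb (B \<rightarrow>\<^sub>E UNIV)"
  proof (rule inj_onI)
    fix u w assume u: "u \<in> B \<rightarrow>\<^sub>E UNIV" and w: "w \<in> B \<rightarrow>\<^sub>E UNIV" and eq: "?comb u = ?comb w"
    have "(\<Sum>v\<in>B. scale (u v - w v) v) = 0"
      using eq by (simp add: scale_left_diff_distrib sum_subtractf)
    then have "\<forall>v\<in>B. u v - w v = 0"
      using independentD[OF assms(3,2) order_refl, of "\<lambda>v. u v - w v"] by blast
    then show "u = w"
      using u w by (intro extensionalityI[of _ B]) (auto simp: PiE_iff)
  qed
  ultimately show ?thesis
    by (simp add: card_image card_PiE assms(2))
qed

lemma card_le_of_independent_family:
  assumes "finite I" "finite S" "f ` I \<subseteq> span S"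
    and indep: "\<And>c. (\<Sum>i\<in>I. scale (c i) (f i)) = 0 \<Longrightarrow> \<forall>i\<in>I. c i = 0"
  shows "card I \<le> card S"
proof -
  have inj: "inj_on f I"
  proof (rule inj_onI, rule ccontr)
    fix i j assume ij: "i \<in> I" "j \<in> I" "f i = f j" "i \<noteq> j"
    define c where "c k = (if k = i then 1 else if k = j then -1 else 0 :: 'a)" for k
    have "(\<Sum>k\<in>I. scale (c k) (f k)) = (\<Sum>k\<in>{i, j}. scale (c k) (f k))"
      by (rule sum.mono_neutral_right) (use assms(1) ij in \<open>auto simp: c_def\<close>)
    also have "\<dots> = 0"
      using ij by (simp add: c_def)
    finally have "c i = 0"
      using indep ij(1) by blast
    then show False
      by (simp add: c_def)
  qed
  have "independent (f ` I)"
  proof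
    assume "dependent (f ` I)"
    then obtain u where u: "\<exists>v\<in>f ` I. u v \<noteq> 0" "(\<Sum>v\<in>f ` I. scale (u v) v) = 0"
      using dependent_finite[OF finite_imageI[OF assms(1)]] by blast
    have "(\<Sum>i\<in>I. scale ((u \<circ> f) i) (f i)) = 0"
      using u(2) by (simp add: sum.reindex[OF inj])
    then have "\<forall>i\<in>I. u (f i) = 0"
      using indep by fastforce
    with u(1) show False
      by blast
  qed
  then have "card (f ` I) \<le> card S"
    using independent_span_bound assms(2,3) by blast
  then show ?thesis
    by (simp add: card_image[OF inj])
qed

end

context finite_dimensional_vector_space
begin

lemma card_subspace:
  assumes "finite (UNIV :: 'a set)" "subspace S"
  shows "card S = CARD('a) ^ dim S"
proof -
  obtain B where "B \<subseteq> S" "independent B" "S \<subseteq> span B" "card B = dim S"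
    by (rule basis_exists)
  moreover have "S = span B"
    using calculation assms(2) span_minimal by blast
  ultimately show ?thesis
    using card_span_independent assms(1) finiteI_independent by metis
qed

end

definition indicator_vec :: "'a set \<Rightarrow> real ^ 'a::finite" where
  "indicator_vec X = (\<chi> p. indicator X p)"

lemma indicator_vec_nth [simp]: "indicator_vec X $ p = indicator X p"
  by (simp add: indicator_vec_def)

lemma indicator_vec_eq_sum_axis: "indicator_vec X = (\<Sum>p\<in>X. axis p 1)"
  by (simp add: vec_eq_iff axis_def indicator_def)

lemma symmetric_design_indicators_independent:
  fixes F :: "'a::finite set set" and a :: "'a set \<Rightarrow> real"
  assumes F: "F \<subseteq> Pow P" "card F = card P" "P \<noteq> {}"
    and k: "\<And>X. X \<in> F \<Longrightarrow> card X = k"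
    and l: "\<And>X Y. X \<in> F \<Longrightarrow> Y \<in> F \<Longrightarrow> X \<noteq> Y \<Longrightarrow> card (X \<inter> Y) = l"
    and "l < k"
    and not_design: "real l * (real (card P) - 1) \<noteq> real k * (real k - 1)"
    and comb: "(\<Sum>X\<in>F. a X *\<^sub>R indicator_vec X) + b *\<^sub>R indicator_vec P = 0"
  shows "b = 0 \<and> (\<forall>X\<in>F. a X = 0)"
proof -
  define A where "A = (\<Sum>X\<in>F. a X)"
  define v where "v = real (card P)"
  have "finite F" "finite P"
    by simp_all
  have point: "(\<Sum>X\<in>F. a X * indicator X p) + b = 0" if "p \<in> P" for p
    using arg_cong[OF comb, of "\<lambda>x. x $ p"] that by simp
  have block: "(\<Sum>X\<in>F. a X * card (X \<inter> Q)) + b * card Q = 0" if "Q \<subseteq> P" for Q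
  proof -
    have "(\<Sum>X\<in>F. a X * card (X \<inter> Q)) = (\<Sum>X\<in>F. a X * (\<Sum>p\<in>Q. indicator X p))"
      by (simp add: indicator_def sum.If_cases Int_def conj_commute)
    also have "\<dots> = (\<Sum>p\<in>Q. \<Sum>X\<in>F. a X * indicator X p)"
      by (simp only: sum_distrib_left sum.swap[of _ F])
    also have "\<dots> = (\<Sum>p\<in>Q. - b)"
      using point that by (intro sum.cong) (auto simp: eq_neg_iff_add_eq_0)
    finally show ?thesis
      by simp
  qed
  have row: "a Y * (real k - l) + (A * l + b * k) = 0" if "Y \<in> F" for Y
  proof -
    have "(\<Sum>X\<in>F. a X * card (X \<inter> Y)) = (\<Sum>X\<in>F. a X * l + (if X = Y then a X * (real k - l) else 0))"
      using that k l \<open>l < k\<close> by (intro sum.cong) (auto simp: algebra_simps)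
    also have "\<dots> = A * l + a Y * (real k - l)"
      using that \<open>finite F\<close> by (simp add: sum.distrib A_def sum_distrib_right)
    finally show ?thesis
      using block[of Y] that F(1) k by auto
  qed
  have total: "A * k + b * v = 0"
  proof -
    have "(\<Sum>X\<in>F. a X * card (X \<inter> P)) = A * k"
      using F(1) k by (auto simp: A_def sum_distrib_right Int_absorb2 intro!: sum.cong)
    then show ?thesis
      using block[of P] by (simp add: v_def)
  qed
  have "(\<Sum>Y\<in>F. a Y * (real k - l) + (A * l + b * k)) = 0"
    using row by simp
  moreover have "(\<Sum>Y\<in>F. a Y * (real k - l) + (A * l + b * k)) = A * (real k - l) + v * (A * l + b * k)"
    by (simp add: sum.distrib sum_distrib_right[symmetric] A_def v_def F(2) distrib_left)
  ultimately have summed: "A * (real k - l) + v * (A * l + b * k) = 0"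
    by simp
  have "A * (l * (v - 1) - k * (real k - 1)) = (A * (real k - l) + v * (A * l + b * k)) - k * (A * k + b * v)"
    by (simp add: algebra_simps)
  then have "A = 0"
    using summed total not_design by (simp add: v_def)
  moreover have "v > 0"
    using F(3) \<open>finite P\<close> by (simp add: v_def card_gt_0_iff)
  ultimately have "b = 0"
    using total by simp
  moreover have "a Y = 0" if "Y \<in> F" for Y
    using row[OF that] \<open>A = 0\<close> \<open>b = 0\<close> \<open>l < k\<close> by simp
  ultimately show ?thesis
    by blast
qed

lemma symmetric_design_identity:
  fixes F :: "'a::finite set set"
  assumes F: "F \<subseteq> Pow P" "card F = card P" "P \<noteq> {}"
    and k: "\<And>X. X \<in> F \<Longrightarrow> card X = k"
    and l: "\<And>X Y. X \<in> F \<Longrightarrow> Y \<in> F \<Longrightarrow> X \<noteq> Y \<Longrightarrow> card (X \<inter> Y) = l"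
    and "l < k"
  shows "l * (card P - 1) = k * (k - 1)"
proof (rule ccontr)
  assume "l * (card P - 1) \<noteq> k * (k - 1)"
  moreover have "card P \<ge> 1" "k \<ge> 1"
    using F(3) \<open>l < k\<close> by (simp_all add: Suc_le_eq card_gt_0_iff)
  ultimately have not_design: "real l * (real (card P) - 1) \<noteq> real k * (real k - 1)"
    by (metis of_nat_1 of_nat_diff of_nat_eq_iff of_nat_mult)
  define I where "I = insert None (Some ` F)"
  define f where "f i = (case i of None \<Rightarrow> indicator_vec P | Some X \<Rightarrow> indicator_vec X)" for i
  have "card I \<le> card ((\<lambda>p. axis p (1::real)) ` P)"
  proof (rule real_vector.card_le_of_independent_family)
    have "indicator_vec X \<in> span ((\<lambda>p. axis p (1::real)) ` P)" if "X \<subseteq> P" for X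
      unfolding indicator_vec_eq_sum_axis using that by (intro span_sum) (auto intro: span_base)
    then show "f ` I \<subseteq> span ((\<lambda>p. axis p (1::real)) ` P)"
      using F(1) by (auto simp: I_def f_def)
    show "\<forall>i\<in>I. c i = 0" if "(\<Sum>i\<in>I. c i *\<^sub>R f i) = 0" for c
    proof -
      have "(\<Sum>X\<in>F. c (Some X) *\<^sub>R indicator_vec X) + c None *\<^sub>R indicator_vec P = 0"
        using that by (simp add: I_def f_def sum.reindex add.commute)
      from symmetric_design_indicators_independent[OF F k l \<open>l < k\<close> not_design this]
      show ?thesis
        by (auto simp: I_def)
    qed
  qed (simp_all add: I_def)
  also have "\<dots> \<le> card P"
    by (rule card_image_le) simp
  finally show False
    using F(2) by (simp add: I_def card_image)
qed

lemma UNIV_bit: "(UNIV :: bit set) = {0, 1}"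
  by (auto intro: bit.exhaust)

instance bit :: finite
  by standard (simp add: UNIV_bit)

lemma card_UNIV_bit: "CARD(bit) = 2"
  by (simp add: UNIV_bit)

lemma card_nonzero_subspace_bit:
  fixes S :: "(bit ^ 'n::finite) set"
  assumes "vec.subspace S"
  shows "card (S - {0}) = 2 ^ vec.dim S - 1"
  using vec.card_subspace[OF _ assms] vec.subspace_0[OF assms] by (simp add: card_UNIV_bit)

lemma intersecting_subspaces_design_identity:
  fixes F :: "(bit ^ 'n::finite) set set"
  assumes "F \<subseteq> Grass2 k" "lambda_intersecting l F" "l < k"
    and card_F: "card F = 2 ^ CARD('n) - 1"
  shows "(2 ^ l - 1) * (2 ^ CARD('n) - 2) = (2 ^ k - 1) * (2 ^ k - 2 :: nat)"
proof -
  have subspace: "vec.subspace X" "vec.dim X = k" if "X \<in> F" for X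
    using assms(1) that by (auto simp: Grass2_def)
  have "inj_on (\<lambda>X. X - {0}) F"
    by (rule inj_onI) (metis insert_Diff vec.subspace_0 subspace(1))
  moreover have card_P: "card (UNIV - {0 :: bit ^ 'n}) = 2 ^ CARD('n) - 1"
    by (simp add: card_Diff_singleton card_UNIV_bit)
  ultimately have "card ((\<lambda>X. X - {0}) ` F) = card (UNIV - {0 :: bit ^ 'n})"
    using card_F by (simp add: card_image)
  moreover have "UNIV - {0 :: bit ^ 'n} \<noteq> {}"
    using vec_eq_iff[of "\<chi> i. 1" "0 :: bit ^ 'n"] by auto
  moreover have "card (X - {0}) = 2 ^ k - 1" if "X \<in> F" for X
    using card_nonzero_subspace_bit[OF subspace(1)] subspace(2) that by simp
  moreover have "card ((X - {0}) \<inter> (Y - {0})) = 2 ^ l - 1" if "X \<in> F" "Y \<in> F" "X \<noteq> Y" for X Y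
  proof -
    have "vec.dim (X \<inter> Y) = l"
      using assms(2) that by (simp add: lambda_intersecting_def)
    moreover have "(X - {0}) \<inter> (Y - {0}) = X \<inter> Y - {0}"
      by blast
    ultimately show ?thesis
      using card_nonzero_subspace_bit[OF vec.subspace_inter[OF subspace(1)[OF that(1)] subspace(1)[OF that(2)]]]
      by simp
  qed
  moreover have "(2::nat) ^ l - 1 < 2 ^ k - 1"
    using \<open>l < k\<close> by (simp add: diff_less_mono one_le_power)
  ultimately have "(2 ^ l - 1) * (card (UNIV - {0 :: bit ^ 'n}) - 1) = (2 ^ k - 1) * (2 ^ k - 1 - 1)"
    by (intro symmetric_design_identity[where F = "(\<lambda>X. X - {0}) ` F"]) auto
  then show ?thesis
    using card_P by (simp add: numeral_2_eq_2)
qed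

lemma bit_two_power_sum_iff:
  assumes "a \<noteq> b"
  shows "bit ((2::nat) ^ a + 2 ^ b) i \<longleftrightarrow> i = a \<or> i = b"
proof -
  have "(2::nat) ^ a + 2 ^ b = or (2 ^ a) (2 ^ b)"
    using assms by (intro disjunctive_add) (auto simp: bit_exp_iff)
  then show ?thesis
    by (simp only: bit_or_iff bit_exp_iff possible_bit_def) simp
qed

lemma two_power_sum_eq_iff:
  assumes "a \<noteq> b" "c \<noteq> e"
  shows "(2::nat) ^ a + 2 ^ b = 2 ^ c + 2 ^ e \<longleftrightarrow> {a, b} = {c, e}"
proof
  assume "(2::nat) ^ a + 2 ^ b = 2 ^ c + 2 ^ e"
  then have "bit ((2::nat) ^ a + 2 ^ b) = bit ((2::nat) ^ c + 2 ^ e)"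
    by simp
  then show "{a, b} = {c, e}"
    using assms by (auto simp: fun_eq_iff bit_two_power_sum_iff)
qed (auto simp: doubleton_eq_iff)

lemma subspace_design_identity_fails:
  fixes n d :: nat
  assumes "4 \<le> n" "1 \<le> d" "2 * d \<le> n"
  shows "(2 ^ d - 1) * (2 ^ n - 2) \<noteq> (2 ^ (2 * d) - 1) * (2 ^ (2 * d) - 2 :: nat)"
proof
  define x :: int where "x = 2 ^ d"
  have x2: "(2::int) ^ (2 * d) = x\<^sup>2"
    by (metis x_def power_mult mult.commute)
  have "1 \<le> (2::nat) ^ d" "2 \<le> (2::nat) ^ n" "2 \<le> (2::nat) ^ (2 * d)"
    using assms power_increasing[of 1 _ "2::nat"] by simp_all
  moreover assume "(2 ^ d - 1) * (2 ^ n - 2) = (2 ^ (2 * d) - 1) * (2 ^ (2 * d) - 2 :: nat)"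
  then have "int ((2 ^ d - 1) * (2 ^ n - 2)) = int ((2 ^ (2 * d) - 1) * (2 ^ (2 * d) - 2))"
    by (rule arg_cong)
  ultimately have "(x - 1) * (2 ^ n - 2) = (x\<^sup>2 - 1) * (x\<^sup>2 - 2)"
    by (simp only: of_nat_mult of_nat_diff of_nat_power of_nat_numeral of_nat_1 x2 x_def)
  also have "\<dots> = (x - 1) * ((x + 1) * (x\<^sup>2 - 2))"
    by (simp add: power2_eq_square algebra_simps)
  finally have "2 ^ n - 2 = (x + 1) * (x\<^sup>2 - 2)"
    using assms(2) by (simp add: x_def)
  then have "2 ^ n + 2 * x = x ^ 3 + x\<^sup>2"
    by (simp add: power2_eq_square power3_eq_cube algebra_simps)
  moreover have "(2::int) ^ (3 * d) = x ^ 3"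
    by (metis x_def power_mult mult.commute)
  ultimately have "int (2 ^ n + 2 ^ (d + 1)) = int (2 ^ (3 * d) + 2 ^ (2 * d))"
    by (simp add: x2 x_def)
  then have "(2::nat) ^ n + 2 ^ (d + 1) = 2 ^ (3 * d) + 2 ^ (2 * d)"
    by (simp only: of_nat_eq_iff)
  then have "{n, d + 1} = {3 * d, 2 * d}"
    by (subst (asm) two_power_sum_eq_iff) (use assms in auto)
  then show False
    using assms by (auto simp: doubleton_eq_iff)
qed

lemma card_intersecting_family_less:
  fixes F :: "(bit ^ 'n::finite) set set"
  assumes "CARD('n) \<ge> 4" "1 \<le> d" "2 * d \<le> CARD('n)"
    and "F \<subseteq> Grass2 (2 * d)" "lambda_intersecting d F"
  shows "card F < 2 ^ CARD('n) - 1"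
proof (rule ccontr)
  assume "\<not> card F < 2 ^ CARD('n) - 1"
  then obtain G where G: "G \<subseteq> F" "card G = 2 ^ CARD('n) - 1"
    by (meson not_less obtain_subset_with_card_n)
  moreover have "lambda_intersecting d G"
    using assms(5) G(1) by (auto simp: lambda_intersecting_def)
  ultimately show False
    using intersecting_subspaces_design_identity[of G "2 * d" d] subspace_design_identity_fails assms
    by auto
qed

theorem proposition5:
  assumes "CARD('n::finite) \<ge> 4"
    and "1 \<le> d" and "d \<le> CARD('n) div 2"
  shows "max_intersecting (2 * d) d TYPE('n) < 2 ^ CARD('n) - 1"
proof -
  let ?sizes = "{card F | F :: (bit ^ 'n) set set. F \<subseteq> Grass2 (2 * d) \<and> lambda_intersecting d F}"
  have "finite ?sizes"
    by (rule finite_subset[of _ "range card"]) auto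
  moreover have "0 \<in> ?sizes"
    by (auto simp: lambda_intersecting_def intro!: exI[of _ "{}"])
  moreover have "2 * d \<le> CARD('n)"
    using assms(3) by linarith
  ultimately show ?thesis
    unfolding max_intersecting_def using card_intersecting_family_less assms(1,2)
    by (subst Max_less_iff) auto
qed

end
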